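(* Let $(Y,T,C)$ be a random vector where $T\in\{0,1\}$ is a binary treatment indicator, $C$ is a vector of baseline covariates and $Y\in\mathbb{R}$ is an outcome. Let $Y_1,Y_0$ be potential outcomes with $Y=Y_0(1-T)+Y_1T$, and let $\text{CATE}(c):=\mathbb{E}(Y_1-Y_0\mid C=c)$. Let $f_0(t,c):=\mathbb{E}(Y\mid C=c,T=t)$ (no restriction on its functional form). Assume $(Y_1,Y_0)\perp T\mid C$ (conditional ignorability) and $0<\mathbb{P}(T=1\mid C=c)<1$ for all $c$ (positivity). For a prediction model $f$, define with the squared error loss $L(f,(y,t,c))=(y-f(t,c))^2$: $e_{\text{orig}}(f):=\mathbb{E}\,(Y-f(T,C))^2$ and $e_{\text{switch}}(f):=\mathbb{E}\,(Y^{(b)}-f(T^{(a)},C^{(b)}))^2$, where $(Y^{(a)},T^{(a)},C^{(a)})$ and $(Y^{(b)},T^{(b)},C^{(b)})$ are independent copies of $(Y,T,C)$. Then $$e_{\text{switch}}(f_0)-e_{\text{orig}}(f_0)=\text{Var}(T)\sum_{t\in\{0,1\}}\mathbb{E}_{C\mid T=t}\left(\text{CATE}(C)^2\right),$$ where $\text{Var}(T)$ is the marginal variance of $T$ and $\mathbb{E}_{C\mid T=t}$ denotes expectation over the conditional distribution of $C$ given $T=t$.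
   Context: $e_{\text{switch}}(f)$ is the expected loss of $f$ on an observation whose treatment value has been replaced by the treatment value of an independent observation from the same distribution. *)

theory Defs
  imports "HOL-Probability.Probability"
begin

definition gen_sigma :: "'a measure \<Rightarrow> 'd measure \<Rightarrow> ('a \<Rightarrow> 'd) \<Rightarrow> 'a measure" where
  "gen_sigma M MZ Z = vimage_algebra (space M) Z MZ"

definition cond_prob_given :: "'a measure \<Rightarrow> 'a measure \<Rightarrow> 'a set \<Rightarrow> 'a \<Rightarrow> real" where
  "cond_prob_given M F A = real_cond_exp M F (indicator A)"

definition cond_indep ::
  "'a measure \<Rightarrow> 'b measure \<Rightarrow> ('a \<Rightarrow> 'b) \<Rightarrow> 'c measure \<Rightarrow> ('a \<Rightarrow> 'c)
     \<Rightarrow> 'd measure \<Rightarrow> ('a \<Rightarrow> 'd) \<Rightarrow> bool" where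
  "cond_indep M MX X MY Y MZ Z \<longleftrightarrow>
     (\<forall>A\<in>sets MX. \<forall>B\<in>sets MY. AE w in M.
        cond_prob_given M (gen_sigma M MZ Z)
           ({v\<in>space M. X v \<in> A} \<inter> {v\<in>space M. Y v \<in> B}) w
        = cond_prob_given M (gen_sigma M MZ Z) {v\<in>space M. X v \<in> A} w
          * cond_prob_given M (gen_sigma M MZ Z) {v\<in>space M. Y v \<in> B} w)"

definition expectation_given_event :: "'a measure \<Rightarrow> 'a set \<Rightarrow> ('a \<Rightarrow> real) \<Rightarrow> real" where
  "expectation_given_event M A g = (\<integral>w. g w * indicator A w \<partial>M) / measure M A"

end

theory Submission
  imports Defs
begin

(* Write R = Y - f0(T,C) for the regression residual and D = f0(1,C) - f0(0,C).
   Ignorability makes E(Y_t | T, C) = E(Y_t | C), so f0(T,C) = T E(Y_1|C) + (1-T) E(Y_0|C);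
   positivity then identifies f0(t,C) with E(Y_t|C) on all of the covariate space, hence D = CATE(C).
   Since T is binary, Y^(b) - f0(T^(a),C^(b)) = R^(b) + (T^(b) - T^(a)) D^(b).  Squaring and integrating
   out the independent T^(a), the cross terms vanish because R is orthogonal to every square-integrable
   function of (T,C), leaving E R^2 + (1-p) E(T D^2) + p E((1-T) D^2) with p = P(T = 1).
   As Var T = p(1-p), this is the claimed expression. *)

lemma integrable_mult_of_square_integrable:
  fixes f g :: "'a \<Rightarrow> real"
  assumes "f \<in> borel_measurable M" "g \<in> borel_measurable M"
    and "integrable M (\<lambda>x. (f x)\<^sup>2)" "integrable M (\<lambda>x. (g x)\<^sup>2)"
  shows "integrable M (\<lambda>x. f x * g x)"
proof (rule Bochner_Integration.integrable_bound[where f="\<lambda>x. (f x)\<^sup>2 + (g x)\<^sup>2"])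
  show "AE x in M. norm (f x * g x) \<le> norm ((f x)\<^sup>2 + (g x)\<^sup>2)"
  proof (rule AE_I2)
    fix x
    have "2 * (\<bar>f x\<bar> * \<bar>g x\<bar>) \<le> (f x)\<^sup>2 + (g x)\<^sup>2"
      using sum_squares_bound[of "\<bar>f x\<bar>" "\<bar>g x\<bar>"] by (simp add: power2_eq_square)
    moreover have "norm (f x * g x) = \<bar>f x\<bar> * \<bar>g x\<bar>" "norm ((f x)\<^sup>2 + (g x)\<^sup>2) = (f x)\<^sup>2 + (g x)\<^sup>2"
      by (simp_all add: abs_mult)
    ultimately show "norm (f x * g x) \<le> norm ((f x)\<^sup>2 + (g x)\<^sup>2)"
      using zero_le_mult_iff by fastforce
  qed
qed (use assms in simp_all)

lemma integrable_square_diff: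
  fixes f g :: "'a \<Rightarrow> real"
  assumes "f \<in> borel_measurable M" "g \<in> borel_measurable M"
    and "integrable M (\<lambda>x. (f x)\<^sup>2)" "integrable M (\<lambda>x. (g x)\<^sup>2)"
  shows "integrable M (\<lambda>x. (f x - g x)\<^sup>2)"
proof -
  have "integrable M (\<lambda>x. (f x)\<^sup>2 + (g x)\<^sup>2 - 2 * (f x * g x))"
    using assms integrable_mult_of_square_integrable[OF assms] by simp
  then show ?thesis by (simp add: power2_diff mult.assoc)
qed

lemma integrable_bounded_mult:
  fixes f h :: "'a \<Rightarrow> real"
  assumes "integrable M f" "h \<in> borel_measurable M" "AE x in M. \<bar>h x\<bar> \<le> c"
  shows "integrable M (\<lambda>x. h x * f x)"
proof (rule Bochner_Integration.integrable_bound[where f="\<lambda>x. c * f x"])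
  show "AE x in M. norm (h x * f x) \<le> norm (c * f x)"
    using assms(3) by eventually_elim (auto simp: abs_mult intro: mult_right_mono)
qed (use assms in simp_all)

lemma integral_pair_measure_mult:
  fixes u v :: "'a \<Rightarrow> real"
  assumes "sigma_finite_measure M" "integrable M u" "integrable M v"
  shows "integrable (M \<Otimes>\<^sub>M M) (\<lambda>p. u (fst p) * v (snd p))"
    and "(\<integral>p. u (fst p) * v (snd p) \<partial>(M \<Otimes>\<^sub>M M)) = integral\<^sup>L M u * integral\<^sup>L M v"
proof -
  interpret pair_sigma_finite M M
    using assms(1) by (simp add: pair_sigma_finite_def)
  have [measurable]: "u \<in> borel_measurable M" "v \<in> borel_measurable M"
    using assms by auto
  show int: "integrable (M \<Otimes>\<^sub>M M) (\<lambda>p. u (fst p) * v (snd p))"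
  proof (rule Fubini_integrable)
    have "(\<lambda>x. \<integral>y. norm (u (fst (x, y)) * v (snd (x, y))) \<partial>M) = (\<lambda>x. norm (u x) * (\<integral>y. norm (v y) \<partial>M))"
      by (simp add: abs_mult)
    then show "integrable M (\<lambda>x. \<integral>y. norm (u (fst (x, y)) * v (snd (x, y))) \<partial>M)"
      using assms(2) by simp
  qed (use assms(3) in simp_all)
  show "(\<integral>p. u (fst p) * v (snd p) \<partial>(M \<Otimes>\<^sub>M M)) = integral\<^sup>L M u * integral\<^sup>L M v"
    using integral_fst'[OF int] by simp
qed

lemma subalgebra_gen_sigma:
  assumes "Z \<in> measurable M N"
  shows "subalgebra M (gen_sigma M N Z)"
  unfolding subalgebra_def gen_sigma_def
  using assms by (auto simp: sets_vimage_algebra2 measurable_space measurable_sets)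

lemma measurable_gen_sigma:
  assumes "Z \<in> measurable M N"
  shows "Z \<in> measurable (gen_sigma M N Z) N"
  unfolding gen_sigma_def
  using assms by (intro measurable_vimage_algebra1) (auto simp: measurable_space)

lemma subalgebra_gen_sigma_gen_sigma:
  assumes "C \<in> measurable (gen_sigma M N Z) K"
  shows "subalgebra (gen_sigma M N Z) (gen_sigma M K C)"
proof -
  have "C -` B \<inter> space M \<in> sets (gen_sigma M N Z)" if "B \<in> sets K" for B
    using measurable_sets[OF assms that] by (simp add: gen_sigma_def)
  moreover have "C \<in> space M \<rightarrow> space K"
    using measurable_space[OF assms] by (auto simp: gen_sigma_def)
  ultimately show ?thesis
    unfolding subalgebra_def by (auto simp: gen_sigma_def sets_vimage_algebra2)
qed

lemma integral_bounded_mult_eq_0_of_indicators: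
  fixes X \<phi> :: "'a \<Rightarrow> real"
  assumes X[measurable]: "X \<in> borel_measurable M" and X_int: "integrable M X"
    and \<phi>[measurable]: "\<phi> \<in> borel_measurable M" and \<phi>_bounded: "AE w in M. \<bar>\<phi> w\<bar> \<le> c"
    and indicators: "\<And>A. A \<in> sets borel \<Longrightarrow> (\<integral>w. \<phi> w * indicator A (X w) \<partial>M) = 0"
  shows "(\<integral>w. \<phi> w * X w \<partial>M) = 0"
proof -
  let ?N = "distr M borel X"
  have integrable_comp: "integrable M (\<lambda>w. h (X w))" if "integrable ?N h" for h :: "real \<Rightarrow> real"
  proof -
    have "h \<in> borel_measurable borel"
      using that by (auto dest: borel_measurable_integrable)
    with that show ?thesis by (simp add: integrable_distr_eq[OF X])
  qed
  have "(\<integral>w. \<phi> w * h (X w) \<partial>M) = 0" if "integrable ?N h" for h :: "real \<Rightarrow> real"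
    using that
  proof (induction rule: integrable_induct)
    case (base A c)
    then show ?case using indicators[of A] by (simp add: mult.assoc[symmetric])
  next
    case (add f g)
    have "integrable M (\<lambda>w. \<phi> w * f (X w))" "integrable M (\<lambda>w. \<phi> w * g (X w))"
      using integrable_comp[OF add(1)] integrable_comp[OF add(2)] \<phi>_bounded
      by (auto intro: integrable_bounded_mult)
    then show ?case using add by (simp add: distrib_left)
  next
    case (lim f s)
    have [measurable]: "f \<in> borel_measurable borel" "s i \<in> borel_measurable borel" for i
      using lim(1,4) by (auto dest: borel_measurable_integrable)
    have "(\<lambda>i. \<integral>w. \<phi> w * s i (X w) \<partial>M) \<longlonglongrightarrow> (\<integral>w. \<phi> w * f (X w) \<partial>M)"
    proof (rule integral_dominated_convergence[where w="\<lambda>w. c * (2 * norm (f (X w)))"])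
      show "integrable M (\<lambda>w. c * (2 * norm (f (X w))))"
        using integrable_comp[OF lim(4)] by simp
      show "AE w in M. (\<lambda>i. \<phi> w * s i (X w)) \<longlonglongrightarrow> \<phi> w * f (X w)"
        using lim(2) by (intro AE_I2 tendsto_mult tendsto_const) (simp add: measurable_space[OF X])
      show "AE w in M. norm (\<phi> w * s i (X w)) \<le> c * (2 * norm (f (X w)))" for i
        using \<phi>_bounded
      proof eventually_elim
        case (elim w)
        then show ?case
          using lim(3)[of "X w" i] by (simp add: abs_mult mult_mono')
      qed
    qed measurable
    then show ?case using lim(5) by (simp add: LIMSEQ_const_iff)
  qed
  from this[of "\<lambda>x. x"] X_int show ?thesis by (simp add: integrable_distr_eq)
qed

lemma cond_indep_compose:
  assumes "cond_indep M MX X MY Y MZ Z" "X \<in> measurable M MX" "g \<in> measurable MX MX'"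
  shows "cond_indep M MX' (\<lambda>w. g (X w)) MY Y MZ Z"
  unfolding cond_indep_def
proof (intro ballI)
  fix A B assume A: "A \<in> sets MX'" and B: "B \<in> sets MY"
  have preimage: "{v \<in> space M. g (X v) \<in> A} = {v \<in> space M. X v \<in> g -` A \<inter> space MX}"
    using measurable_space[OF assms(2)] by auto
  show "AE w in M.
        cond_prob_given M (gen_sigma M MZ Z) ({v \<in> space M. g (X v) \<in> A} \<inter> {v \<in> space M. Y v \<in> B}) w
      = cond_prob_given M (gen_sigma M MZ Z) {v \<in> space M. g (X v) \<in> A} w
        * cond_prob_given M (gen_sigma M MZ Z) {v \<in> space M. Y v \<in> B} w"
    unfolding preimage
    using assms(1)[unfolded cond_indep_def] measurable_sets[OF assms(3) A] B by blast
qed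

context sigma_finite_subalgebra
begin

lemma square_integrable_cond_exp:
  fixes X :: "'a \<Rightarrow> real"
  assumes "integrable M X" "integrable M (\<lambda>w. (X w)\<^sup>2)"
  shows "integrable M (\<lambda>w. (real_cond_exp M F X w)\<^sup>2)"
  using assms by (intro integrable_convex_cond_exp[where I=UNIV]) (auto simp: convex_power2)

lemma integral_mult_cond_exp_residual:
  fixes X Z :: "'a \<Rightarrow> real"
  assumes [measurable]: "Z \<in> borel_measurable F" "X \<in> borel_measurable M"
    and "integrable M (\<lambda>w. Z w * X w)"
  shows "(\<integral>w. Z w * (X w - real_cond_exp M F X w) \<partial>M) = 0"
proof -
  have "(\<integral>w. Z w * (X w - real_cond_exp M F X w) \<partial>M)
      = (\<integral>w. Z w * X w \<partial>M) - (\<integral>w. Z w * real_cond_exp M F X w \<partial>M)"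
    using assms(3) real_cond_exp_intg(1)[OF assms(3)] by (simp add: right_diff_distrib)
  then show ?thesis
    using real_cond_exp_intg(2)[OF assms(3)] by simp
qed

end

context finite_measure_subalgebra
begin

lemma cond_exp_indicator_bounds:
  assumes "A \<in> sets M"
  shows "AE w in M. 0 \<le> real_cond_exp M F (indicator A) w \<and> real_cond_exp M F (indicator A) w \<le> 1"
proof -
  have "integrable M (indicator A :: 'a \<Rightarrow> real)"
    using assms by (intro integrable_real_indicator) (auto simp: less_top[symmetric])
  then have "AE w in M. 0 \<le> real_cond_exp M F (indicator A) w"
      and "AE w in M. real_cond_exp M F (indicator A) w \<le> 1"
    by (intro real_cond_exp_ge_c real_cond_exp_le_c; simp add: indicator_def)+
  then show ?thesis by eventually_elim simp
qed

lemma cond_exp_indicator_diff_space: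
  assumes [measurable]: "A \<in> sets M"
  shows "AE w in M. real_cond_exp M F (indicator (space M - A)) w = 1 - real_cond_exp M F (indicator A) w"
proof -
  have A_int: "integrable M (indicator A :: 'a \<Rightarrow> real)"
    by (intro integrable_real_indicator) (auto simp: less_top[symmetric])
  have "AE w in M. real_cond_exp M F (indicator (space M - A)) w
      = real_cond_exp M F (\<lambda>v. 1 - indicator A v) w"
    by (rule real_cond_exp_cong) (auto simp: indicator_def)
  moreover have "AE w in M. real_cond_exp M F (\<lambda>v. 1 - indicator A v) w
      = real_cond_exp M F (\<lambda>_. 1) w - real_cond_exp M F (indicator A) w"
    using A_int by (intro real_cond_exp_diff) auto
  moreover have "AE w in M. real_cond_exp M F (\<lambda>_. 1) w = 1"
    by (rule real_cond_exp_F_meas) auto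
  ultimately show ?thesis by eventually_elim simp
qed

lemma AE_not_in_of_cond_prob_pos:
  assumes [measurable]: "A \<in> sets M" "N \<in> sets F"
    and pos: "AE w in M. 0 < real_cond_exp M F (indicator A) w"
    and disjoint: "AE w in M. w \<in> N \<longrightarrow> w \<notin> A"
  shows "AE w in M. w \<notin> N"
proof -
  define q where "q = real_cond_exp M F (indicator A)"
  have [measurable]: "N \<in> sets M"
    using assms(2) subalg by (auto simp: subalgebra_def)
  have NA_int: "integrable M (\<lambda>w. indicator N w * indicator A w :: real)"
    unfolding indicator_inter_arith[symmetric]
    by (intro integrable_real_indicator) (auto simp: less_top[symmetric])
  have "(\<integral>w. indicator N w * q w \<partial>M) = (\<integral>w. indicator N w * indicator A w \<partial>M)"
    unfolding q_def by (rule real_cond_exp_intg(2)[OF NA_int]) measurable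
  also have "\<dots> = 0"
    using disjoint by (intro integral_eq_zero_AE) (auto simp: indicator_def)
  finally have "(\<integral>w. indicator N w * q w \<partial>M) = 0" .
  moreover have "integrable M (\<lambda>w. indicator N w * q w)"
    unfolding q_def by (rule real_cond_exp_intg(1)[OF NA_int]) measurable
  moreover have "AE w in M. 0 \<le> indicator N w * q w"
    using pos by eventually_elim (simp add: q_def)
  ultimately have "AE w in M. indicator N w * q w = 0"
    by (simp add: integral_nonneg_eq_0_iff_AE)
  then show ?thesis
    using pos by eventually_elim (auto simp: q_def indicator_def)
qed

lemma AE_eq_of_AE_eq_on_cond_prob_pos:
  fixes g h :: "'a \<Rightarrow> real"
  assumes "A \<in> sets M" and pos: "AE w in M. 0 < real_cond_exp M F (indicator A) w"
    and [measurable]: "g \<in> borel_measurable F" "h \<in> borel_measurable F"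
    and eq_on: "AE w in M. w \<in> A \<longrightarrow> g w = h w"
  shows "AE w in M. g w = h w"
proof -
  have space_F: "space F = space M"
    using subalg by (simp add: subalgebra_def)
  have "{w \<in> space F. g w \<noteq> h w} \<in> sets F" by (rule borel_measurable_neq) fact+
  moreover have "AE w in M. w \<in> {w \<in> space F. g w \<noteq> h w} \<longrightarrow> w \<notin> A"
    using eq_on by eventually_elim auto
  ultimately have "AE w in M. w \<notin> {w \<in> space F. g w \<noteq> h w}"
    by (rule AE_not_in_of_cond_prob_pos[OF assms(1) _ pos])
  then show ?thesis
    using AE_space by eventually_elim (auto simp: space_F)
qed

lemma integral_mult_indicator_inter_of_cond_factorization:
  assumes [measurable]: "A \<in> sets M" "B \<in> sets M" "u \<in> borel_measurable F"
    and u_bounded: "\<And>w. \<bar>u w\<bar> \<le> 1"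
    and factorization: "AE w in M. real_cond_exp M F (indicator (A \<inter> B)) w
          = real_cond_exp M F (indicator A) w * real_cond_exp M F (indicator B) w"
  shows "(\<integral>w. u w * indicator (A \<inter> B) w \<partial>M)
       = (\<integral>w. (u w * real_cond_exp M F (indicator B) w) * indicator A w \<partial>M)"
proof -
  have [measurable]: "u \<in> borel_measurable M"
    using measurable_from_subalg[OF subalg] assms(3) by blast
  have indicator_integrable: "integrable M (indicator S :: 'a \<Rightarrow> real)" if "S \<in> sets M" for S
    using that by (intro integrable_real_indicator) (auto simp: less_top[symmetric])
  have "(\<integral>w. u w * indicator (A \<inter> B) w \<partial>M)
      = (\<integral>w. u w * real_cond_exp M F (indicator (A \<inter> B)) w \<partial>M)"
  proof (rule real_cond_exp_intg(2)[symmetric])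
    show "integrable M (\<lambda>w. u w * indicator (A \<inter> B) w)"
      using u_bounded by (intro integrable_bounded_mult[where c=1] indicator_integrable) auto
  qed measurable
  also have "\<dots> = (\<integral>w. (u w * real_cond_exp M F (indicator B) w) * real_cond_exp M F (indicator A) w \<partial>M)"
  proof (rule integral_cong_AE)
    show "AE w in M. u w * real_cond_exp M F (indicator (A \<inter> B)) w
        = (u w * real_cond_exp M F (indicator B) w) * real_cond_exp M F (indicator A) w"
      using factorization by eventually_elim (simp add: ac_simps)
  qed measurable
  also have "\<dots> = (\<integral>w. (u w * real_cond_exp M F (indicator B) w) * indicator A w \<partial>M)"
  proof (rule real_cond_exp_intg(2))
    have "AE w in M. \<bar>u w * real_cond_exp M F (indicator B) w\<bar> \<le> 1"
      using cond_exp_indicator_bounds[OF assms(2)]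
    proof eventually_elim
      case (elim w)
      then show ?case using u_bounded[of w] by (simp add: abs_mult mult_le_one)
    qed
    then show "integrable M (\<lambda>w. (u w * real_cond_exp M F (indicator B) w) * indicator A w)"
      by (intro integrable_bounded_mult[where c=1] indicator_integrable) auto
  qed measurable
  finally show ?thesis .
qed

lemma integral_mult_indicator_eq_cond_prob_of_cond_indep:
  assumes [measurable]: "X \<in> borel_measurable M" "B \<in> sets M" "u \<in> borel_measurable F"
    and X_int: "integrable M X" and u_bounded: "\<And>w. \<bar>u w\<bar> \<le> 1"
    and cond_indep: "\<And>A. A \<in> sets borel \<Longrightarrow> AE w in M.
          real_cond_exp M F (indicator ({v \<in> space M. X v \<in> A} \<inter> B)) w
        = real_cond_exp M F (indicator {v \<in> space M. X v \<in> A}) w * real_cond_exp M F (indicator B) w"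
  shows "(\<integral>w. (u w * indicator B w) * X w \<partial>M)
       = (\<integral>w. (u w * real_cond_exp M F (indicator B) w) * X w \<partial>M)"
proof -
  define q where "q = real_cond_exp M F (indicator B)"
  have [measurable]: "u \<in> borel_measurable M"
    by (rule measurable_from_subalg[OF subalg assms(3)])
  have [measurable]: "q \<in> borel_measurable M"
    by (simp add: q_def)
  have q_bounds: "AE w in M. 0 \<le> q w \<and> q w \<le> 1"
    unfolding q_def by (rule cond_exp_indicator_bounds) simp
  have uq_bounded: "AE w in M. \<bar>u w * q w\<bar> \<le> 1"
    using q_bounds
  proof eventually_elim
    case (elim w)
    then show ?case using u_bounded[of w] by (simp add: abs_mult mult_le_one)
  qed
  have "(\<integral>w. (u w * (indicator B w - q w)) * X w \<partial>M) = 0"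
  proof (rule integral_bounded_mult_eq_0_of_indicators[where c=1])
    show "AE w in M. \<bar>u w * (indicator B w - q w)\<bar> \<le> 1"
      using q_bounds
    proof eventually_elim
      case (elim w)
      then have "\<bar>indicator B w - q w\<bar> \<le> (1::real)" by (auto simp: indicator_def)
      then show ?case using u_bounded[of w] by (simp add: abs_mult mult_le_one)
    qed
    show "integrable M X" by (fact X_int)
    fix A :: "real set" assume [measurable]: "A \<in> sets borel"
    let ?XA = "{v \<in> space M. X v \<in> A}"
    have "(\<integral>w. u w * (indicator B w - q w) * indicator A (X w) \<partial>M)
        = (\<integral>w. u w * indicator (?XA \<inter> B) w - (u w * q w) * indicator ?XA w \<partial>M)"
      by (rule Bochner_Integration.integral_cong) (auto simp: indicator_def algebra_simps)
    also have "\<dots> = (\<integral>w. u w * indicator (?XA \<inter> B) w \<partial>M) - (\<integral>w. (u w * q w) * indicator ?XA w \<partial>M)"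
    proof (rule Bochner_Integration.integral_diff)
      show "integrable M (\<lambda>w. u w * indicator (?XA \<inter> B) w)"
        using u_bounded by (intro integrable_bounded_mult[where c=1] integrable_real_indicator) (auto simp: less_top[symmetric])
      show "integrable M (\<lambda>w. (u w * q w) * indicator ?XA w)"
        using uq_bounded by (intro integrable_bounded_mult[where c=1] integrable_real_indicator) (auto simp: less_top[symmetric])
    qed
    also have "\<dots> = 0"
      using integral_mult_indicator_inter_of_cond_factorization[OF _ _ _ u_bounded cond_indep]
      by (simp add: q_def)
    finally show "(\<integral>w. u w * (indicator B w - q w) * indicator A (X w) \<partial>M) = 0" .
  qed measurable
  moreover have "integrable M (\<lambda>w. (u w * indicator B w) * X w)" "integrable M (\<lambda>w. (u w * q w) * X w)"
    using X_int u_bounded uq_bounded by (auto intro: integrable_bounded_mult[where c=1] simp: indicator_def)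
  ultimately show ?thesis
    by (simp add: q_def right_diff_distrib left_diff_distrib)
qed

lemma integral_mult_indicator_cond_exp_of_cond_indep:
  assumes [measurable]: "X \<in> borel_measurable M" "B \<in> sets M" "u \<in> borel_measurable F"
    and X_int: "integrable M X" and u_bounded: "\<And>w. \<bar>u w\<bar> \<le> 1"
    and cond_indep: "\<And>A. A \<in> sets borel \<Longrightarrow> AE w in M.
          real_cond_exp M F (indicator ({v \<in> space M. X v \<in> A} \<inter> B)) w
        = real_cond_exp M F (indicator {v \<in> space M. X v \<in> A}) w * real_cond_exp M F (indicator B) w"
  shows "(\<integral>w. (u w * indicator B w) * X w \<partial>M) = (\<integral>w. (u w * indicator B w) * real_cond_exp M F X w \<partial>M)"
proof -
  define q where "q = real_cond_exp M F (indicator B)"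
  define m where "m = real_cond_exp M F X"
  have [measurable]: "u \<in> borel_measurable M"
    by (rule measurable_from_subalg[OF subalg assms(3)])
  have [measurable]: "q \<in> borel_measurable F" "m \<in> borel_measurable F"
      "q \<in> borel_measurable M" "m \<in> borel_measurable M"
    by (simp_all add: q_def m_def)
  have uq_bounded: "AE w in M. \<bar>u w * q w\<bar> \<le> 1"
    using cond_exp_indicator_bounds[OF assms(2)]
  proof eventually_elim
    case (elim w)
    then show ?case using u_bounded[of w] by (simp add: q_def abs_mult mult_le_one)
  qed
  have "(\<integral>w. (u w * indicator B w) * X w \<partial>M) = (\<integral>w. (u w * q w) * X w \<partial>M)"
    unfolding q_def by (rule integral_mult_indicator_eq_cond_prob_of_cond_indep) fact+
  also have "\<dots> = (\<integral>w. (u w * q w) * m w \<partial>M)"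
    unfolding m_def
    by (rule real_cond_exp_intg(2)[symmetric]) (use X_int uq_bounded in \<open>auto intro: integrable_bounded_mult[where c=1]\<close>)
  also have "\<dots> = (\<integral>w. (u w * m w) * q w \<partial>M)"
    by (simp add: ac_simps)
  also have "\<dots> = (\<integral>w. (u w * m w) * indicator B w \<partial>M)"
  proof (unfold q_def, rule real_cond_exp_intg(2))
    have "integrable M m" unfolding m_def using X_int by (rule real_cond_exp_int(1))
    then have "integrable M (\<lambda>w. (u w * indicator B w) * m w)"
      using u_bounded by (intro integrable_bounded_mult[where c=1]) (auto simp: indicator_def)
    then show "integrable M (\<lambda>w. (u w * m w) * indicator B w)"
      by (simp add: ac_simps)
  qed measurable
  finally show ?thesis by (simp add: m_def ac_simps)
qed

end

lemma integral_slice_cond_exp_of_cond_indep: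
  fixes T X :: "'a \<Rightarrow> real" and C :: "'a \<Rightarrow> 'c::topological_space"
  assumes "finite_measure M"
    and [measurable]: "T \<in> borel_measurable M" "C \<in> borel_measurable M" "X \<in> borel_measurable M"
    and X_int: "integrable M X"
    and cond_indep: "cond_indep M borel X borel T borel C"
    and U: "U \<in> sets borel"
  shows "(\<integral>w. (indicator (C -` U \<inter> space M) w * indicator {v \<in> space M. T v = t} w) * X w \<partial>M)
       = (\<integral>w. (indicator (C -` U \<inter> space M) w * indicator {v \<in> space M. T v = t} w)
             * real_cond_exp M (gen_sigma M borel C) X w \<partial>M)"
proof -
  define G where "G = gen_sigma M borel C"
  interpret G: finite_measure_subalgebra M G
    using assms(1) by (simp add: finite_measure_subalgebra_def finite_measure_subalgebra_axioms_def
        G_def subalgebra_gen_sigma)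
  have "(\<integral>w. (indicator (C -` U \<inter> space M) w * indicator {v \<in> space M. T v = t} w) * X w \<partial>M)
      = (\<integral>w. (indicator (C -` U \<inter> space M) w * indicator {v \<in> space M. T v = t} w)
            * real_cond_exp M G X w \<partial>M)"
  proof (rule G.integral_mult_indicator_cond_exp_of_cond_indep)
    show "indicator (C -` U \<inter> space M) \<in> borel_measurable G"
    proof (rule borel_measurable_indicator)
      have "C \<in> borel_measurable G"
        unfolding G_def by (rule measurable_gen_sigma) simp
      from measurable_sets[OF this U] show "C -` U \<inter> space M \<in> sets G"
        by (simp add: G_def gen_sigma_def)
    qed
    fix A :: "real set" assume "A \<in> sets borel"
    then show "AE w in M.
          real_cond_exp M G (indicator ({v \<in> space M. X v \<in> A} \<inter> {v \<in> space M. T v = t})) w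
        = real_cond_exp M G (indicator {v \<in> space M. X v \<in> A}) w
          * real_cond_exp M G (indicator {v \<in> space M. T v = t}) w"
      using cond_indep[unfolded cond_indep_def cond_prob_given_def, rule_format, of A "{t}"]
      by (simp add: G_def)
  qed (auto simp: X_int indicator_def)
  then show ?thesis by (simp add: G_def)
qed

lemma cond_exp_pair_eq_of_cond_indep_binary:
  fixes T X :: "'a \<Rightarrow> real" and C :: "'a \<Rightarrow> 'c::topological_space"
  assumes "finite_measure M"
    and [measurable]: "T \<in> borel_measurable M" "C \<in> borel_measurable M" "X \<in> borel_measurable M"
    and X_int: "integrable M X"
    and T_bin: "\<forall>w\<in>space M. T w \<in> {0, 1}"
    and cond_indep: "cond_indep M borel X borel T borel C"
  shows "AE w in M. real_cond_exp M (gen_sigma M (borel \<Otimes>\<^sub>M borel) (\<lambda>v. (T v, C v))) X w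
            = real_cond_exp M (gen_sigma M borel C) X w"
proof -
  define G where "G = gen_sigma M borel C"
  define H where "H = gen_sigma M (borel \<Otimes>\<^sub>M borel) (\<lambda>v. (T v, C v))"
  have TC_meas: "(\<lambda>v. (T v, C v)) \<in> measurable M (borel \<Otimes>\<^sub>M borel)" by measurable
  interpret G: finite_measure_subalgebra M G
    using assms(1) by (simp add: finite_measure_subalgebra_def finite_measure_subalgebra_axioms_def
        G_def subalgebra_gen_sigma)
  interpret H: finite_measure_subalgebra M H
    using assms(1) by (simp add: finite_measure_subalgebra_def finite_measure_subalgebra_axioms_def
        H_def subalgebra_gen_sigma[OF TC_meas])
  have "(\<lambda>v. snd (T v, C v)) \<in> borel_measurable H"
    unfolding H_def using measurable_gen_sigma[OF TC_meas] by measurable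
  then have subalg_HG: "subalgebra H G"
    unfolding G_def H_def by (intro subalgebra_gen_sigma_gen_sigma) simp
  define m where "m = real_cond_exp M G X"
  have m_int: "integrable M m" unfolding m_def using X_int by (rule G.real_cond_exp_int(1))
  define slice :: "real \<Rightarrow> 'c set \<Rightarrow> 'a \<Rightarrow> real"
    where "slice t U w = indicator (C -` U \<inter> space M) w * indicator {v \<in> space M. T v = t} w" for t U w
  have slice_meas[measurable]: "slice t U \<in> borel_measurable M" if "U \<in> sets borel" for t U
    using that unfolding slice_def by measurable
  have slice_bounded: "\<bar>slice t U w\<bar> \<le> 1" for t U w
    by (simp add: slice_def indicator_def)
  have "AE w in M. real_cond_exp M H X w = m w"
  proof (rule H.real_cond_exp_charact)
    show "m \<in> borel_measurable H"
      unfolding m_def by (rule measurable_from_subalg[OF subalg_HG borel_measurable_cond_exp])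
    fix S assume "S \<in> sets H"
    then obtain U where U: "U \<in> sets (borel \<Otimes>\<^sub>M borel)" "S = (\<lambda>v. (T v, C v)) -` U \<inter> space M"
      unfolding H_def gen_sigma_def by (auto simp: sets_vimage_algebra2 space_pair_measure)
    have slices: "Pair t -` U \<in> sets borel" for t
      using U(1) by (rule sets_Pair1)
    have "(\<integral>w\<in>S. f w \<partial>M) = (\<integral>w. slice 1 (Pair 1 -` U) w * f w \<partial>M) + (\<integral>w. slice 0 (Pair 0 -` U) w * f w \<partial>M)"
      if f: "integrable M f" for f
    proof -
      have "(\<integral>w\<in>S. f w \<partial>M) = (\<integral>w. slice 1 (Pair 1 -` U) w * f w + slice 0 (Pair 0 -` U) w * f w \<partial>M)"
        unfolding set_lebesgue_integral_def
        by (rule Bochner_Integration.integral_cong)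
          (use T_bin in \<open>auto simp: U(2) slice_def indicator_def\<close>)
      also have "\<dots> = (\<integral>w. slice 1 (Pair 1 -` U) w * f w \<partial>M) + (\<integral>w. slice 0 (Pair 0 -` U) w * f w \<partial>M)"
        using f slices slice_bounded
        by (intro Bochner_Integration.integral_add integrable_bounded_mult[where c=1]) auto
      finally show ?thesis .
    qed
    then show "(\<integral>w\<in>S. X w \<partial>M) = (\<integral>w\<in>S. m w \<partial>M)"
      using X_int m_int slices
        integral_slice_cond_exp_of_cond_indep[OF assms(1-4) X_int cond_indep slices]
      by (simp add: slice_def m_def G_def)
  qed (use X_int m_int in auto)
  then show ?thesis unfolding G_def H_def m_def .
qed

lemma (in prob_space) measure_pos_of_cond_prob_pos:
  assumes "subalgebra M F" "A \<in> sets M"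
    and pos: "AE w in M. 0 < real_cond_exp M F (indicator A) w"
  shows "0 < measure M A"
proof (rule ccontr)
  interpret finite_measure_subalgebra M F
    using assms(1) by unfold_locales
  assume "\<not> 0 < measure M A"
  then have "A \<in> null_sets M"
    using assms(2) by (simp add: zero_less_measure_iff null_setsI emeasure_eq_measure)
  then have "AE w in M. w \<in> space M \<longrightarrow> w \<notin> A"
    using AE_not_in by force
  moreover have "space M \<in> sets F"
    using assms(1) by (metis sets.top subalgebra_def)
  ultimately have "AE w in M. w \<notin> space M"
    using AE_not_in_of_cond_prob_pos[OF assms(2) _ pos] by blast
  then show False
    using AE_space by (auto simp: AE_False elim: AE_mp)
qed

lemma (in prob_space) variance_binary:
  fixes T :: "'a \<Rightarrow> real"
  assumes "T \<in> borel_measurable M" "\<forall>w\<in>space M. T w \<in> {0, 1}"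
  shows "variance T = expectation T * (1 - expectation T)"
proof -
  have T_int: "integrable M T"
    using assms by (intro integrable_const_bound[where B=1] AE_I2) auto
  have "variance T = (\<integral>w. (1 - 2 * expectation T) * T w + (expectation T)\<^sup>2 \<partial>M)"
    by (rule Bochner_Integration.integral_cong)
      (use assms(2) in \<open>auto simp: power2_eq_square algebra_simps\<close>)
  also have "\<dots> = (1 - 2 * expectation T) * expectation T + (expectation T)\<^sup>2"
    using T_int by (simp add: prob_space)
  finally show ?thesis by (simp add: power2_eq_square algebra_simps)
qed

lemma integral_switched_treatment_square_expand:
  fixes T R D :: "'a \<Rightarrow> real"
  assumes "prob_space M"
    and [measurable]: "T \<in> borel_measurable M" "R \<in> borel_measurable M" "D \<in> borel_measurable M"
    and T_bin: "\<forall>w\<in>space M. T w \<in> {0, 1}"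
    and v1_int: "integrable M (\<lambda>w. (R w)\<^sup>2 + 2 * (T w * D w * R w) + T w * (D w)\<^sup>2)"
    and v2_int: "integrable M (\<lambda>w. (D w)\<^sup>2 - 2 * (D w * R w) - 2 * (T w * (D w)\<^sup>2))"
  shows "(\<integral>p. (R (snd p) + (T (snd p) - T (fst p)) * D (snd p))\<^sup>2 \<partial>(M \<Otimes>\<^sub>M M))
       = (\<integral>w. (R w)\<^sup>2 + 2 * (T w * D w * R w) + T w * (D w)\<^sup>2 \<partial>M)
         + (\<integral>w. T w \<partial>M) * (\<integral>w. (D w)\<^sup>2 - 2 * (D w * R w) - 2 * (T w * (D w)\<^sup>2) \<partial>M)"
proof -
  interpret prob_space M by (rule assms(1))
  define v1 where "v1 w = (R w)\<^sup>2 + 2 * (T w * D w * R w) + T w * (D w)\<^sup>2" for w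
  define v2 where "v2 w = (D w)\<^sup>2 - 2 * (D w * R w) - 2 * (T w * (D w)\<^sup>2)" for w
  have T_int: "integrable M T"
    using T_bin by (intro integrable_const_bound[where B=1] AE_I2) auto
  \<comment> \<open>as T is 0-1 valued, the integrand is affine in the switched treatment\<close>
  have pointwise: "(R b + (T b - T a) * D b)\<^sup>2 = 1 * v1 b + T a * v2 b"
    if "a \<in> space M" "b \<in> space M" for a b
  proof -
    have "T a = 0 \<or> T a = 1" "T b = 0 \<or> T b = 1"
      using T_bin that by auto
    then show ?thesis
      unfolding v1_def v2_def by (elim disjE) (simp_all add: power2_eq_square algebra_simps)
  qed
  have "(\<integral>p. (R (snd p) + (T (snd p) - T (fst p)) * D (snd p))\<^sup>2 \<partial>(M \<Otimes>\<^sub>M M))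
      = (\<integral>p. 1 * v1 (snd p) + T (fst p) * v2 (snd p) \<partial>(M \<Otimes>\<^sub>M M))"
    by (rule Bochner_Integration.integral_cong) (auto simp: space_pair_measure pointwise)
  also have "\<dots> = (\<integral>w. v1 w \<partial>M) + (\<integral>w. T w \<partial>M) * (\<integral>w. v2 w \<partial>M)"
    using v1_int v2_int unfolding v1_def[abs_def, symmetric] v2_def[abs_def, symmetric]
    using integral_pair_measure_mult[OF sigma_finite_measure _ _, of "\<lambda>_. 1" v1]
      integral_pair_measure_mult[OF sigma_finite_measure T_int, of v2]
    by (simp add: prob_space)
  finally show ?thesis by (simp add: v1_def v2_def)
qed

lemma integral_switched_treatment_square:
  fixes T R D :: "'a \<Rightarrow> real"
  assumes "prob_space M"
    and [measurable]: "T \<in> borel_measurable M" "R \<in> borel_measurable M" "D \<in> borel_measurable M"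
    and T_bin: "\<forall>w\<in>space M. T w \<in> {0, 1}"
    and R_sq: "integrable M (\<lambda>w. (R w)\<^sup>2)" and D_sq: "integrable M (\<lambda>w. (D w)\<^sup>2)"
    and orth_D: "(\<integral>w. D w * R w \<partial>M) = 0" and orth_TD: "(\<integral>w. (T w * D w) * R w \<partial>M) = 0"
  shows "(\<integral>p. (R (snd p) + (T (snd p) - T (fst p)) * D (snd p))\<^sup>2 \<partial>(M \<Otimes>\<^sub>M M))
       = (\<integral>w. (R w)\<^sup>2 \<partial>M) + (1 - (\<integral>w. T w \<partial>M)) * (\<integral>w. T w * (D w)\<^sup>2 \<partial>M)
         + (\<integral>w. T w \<partial>M) * (\<integral>w. (1 - T w) * (D w)\<^sup>2 \<partial>M)"
proof -
  have T_bounded: "AE w in M. \<bar>T w\<bar> \<le> 1"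
    using T_bin by (intro AE_I2) auto
  have TD_sq: "integrable M (\<lambda>w. (T w * D w)\<^sup>2)"
    using D_sq T_bounded by (simp add: power_mult_distrib)
      (intro integrable_bounded_mult[where c=1]; auto simp: abs_square_le_1)
  have TD2_int: "integrable M (\<lambda>w. T w * (D w)\<^sup>2)"
    using D_sq T_bounded by (intro integrable_bounded_mult[where c=1]) auto
  have DR_int: "integrable M (\<lambda>w. D w * R w)" "integrable M (\<lambda>w. T w * D w * R w)"
    using D_sq R_sq TD_sq by (auto intro: integrable_mult_of_square_integrable)
  have v1_eq: "(\<integral>w. (R w)\<^sup>2 + 2 * (T w * D w * R w) + T w * (D w)\<^sup>2 \<partial>M)
      = (\<integral>w. (R w)\<^sup>2 \<partial>M) + (\<integral>w. T w * (D w)\<^sup>2 \<partial>M)"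
    using R_sq TD2_int DR_int orth_TD by simp
  have v2_eq: "(\<integral>w. (D w)\<^sup>2 - 2 * (D w * R w) - 2 * (T w * (D w)\<^sup>2) \<partial>M)
      = (\<integral>w. (D w)\<^sup>2 \<partial>M) - 2 * (\<integral>w. T w * (D w)\<^sup>2 \<partial>M)"
    using D_sq TD2_int DR_int orth_D by simp
  have untreated_eq: "(\<integral>w. (1 - T w) * (D w)\<^sup>2 \<partial>M) = (\<integral>w. (D w)\<^sup>2 \<partial>M) - (\<integral>w. T w * (D w)\<^sup>2 \<partial>M)"
    using D_sq TD2_int by (simp add: left_diff_distrib)
  have "integrable M (\<lambda>w. (R w)\<^sup>2 + 2 * (T w * D w * R w) + T w * (D w)\<^sup>2)"
    "integrable M (\<lambda>w. (D w)\<^sup>2 - 2 * (D w * R w) - 2 * (T w * (D w)\<^sup>2))"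
    using R_sq D_sq TD2_int DR_int by simp_all
  from integral_switched_treatment_square_expand[OF assms(1-5) this] show ?thesis
    unfolding v1_eq v2_eq untreated_eq by (simp add: algebra_simps)
qed

locale potential_outcomes = prob_space M
  for M :: "'a measure" +
  fixes Y Y0 Y1 T :: "'a \<Rightarrow> real"
    and C :: "'a \<Rightarrow> 'c::topological_space"
    and f0 :: "real \<Rightarrow> 'c \<Rightarrow> real"
    and cate :: "'c \<Rightarrow> real"
  assumes T_meas[measurable]: "T \<in> borel_measurable M"
    and C_meas[measurable]: "C \<in> borel_measurable M"
    and Y0_meas[measurable]: "Y0 \<in> borel_measurable M"
    and Y1_meas[measurable]: "Y1 \<in> borel_measurable M"
    and T_bin: "\<forall>w\<in>space M. T w \<in> {0, 1}"
    and Y0_sq: "integrable M (\<lambda>w. (Y0 w)\<^sup>2)"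
    and Y1_sq: "integrable M (\<lambda>w. (Y1 w)\<^sup>2)"
    and Y_def: "\<forall>w\<in>space M. Y w = Y0 w * (1 - T w) + Y1 w * T w"
    and cate_meas[measurable]: "cate \<in> borel_measurable borel"
    and cate_def: "AE w in M. cate (C w) =
          real_cond_exp M (gen_sigma M borel C) (\<lambda>v. Y1 v - Y0 v) w"
    and f0_meas: "(\<lambda>(t, c). f0 t c) \<in> borel_measurable (borel \<Otimes>\<^sub>M borel)"
    and f0_def: "AE w in M. f0 (T w) (C w) =
          real_cond_exp M (gen_sigma M (borel \<Otimes>\<^sub>M borel) (\<lambda>v. (T v, C v))) Y w"
    and ignorability: "cond_indep M (borel \<Otimes>\<^sub>M borel) (\<lambda>w. (Y1 w, Y0 w)) borel T borel C"
    and positivity: "AE w in M. 0 < cond_prob_given M (gen_sigma M borel C) {v\<in>space M. T v = 1} w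
                           \<and> cond_prob_given M (gen_sigma M borel C) {v\<in>space M. T v = 1} w < 1"
begin

abbreviation "sigma_C \<equiv> gen_sigma M borel C"
abbreviation "sigma_TC \<equiv> gen_sigma M (borel \<Otimes>\<^sub>M borel) (\<lambda>v. (T v, C v))"

sublocale cov: finite_measure_subalgebra M sigma_C
  by unfold_locales (simp add: subalgebra_gen_sigma)

sublocale treat_cov: finite_measure_subalgebra M sigma_TC
  by unfold_locales (simp add: subalgebra_gen_sigma)

definition residual :: "'a \<Rightarrow> real" where
  "residual w = Y w - f0 (T w) (C w)"

definition effect :: "'a \<Rightarrow> real" where
  "effect w = f0 1 (C w) - f0 0 (C w)"

lemma f0_measurable[measurable]:
  "(\<lambda>p. f0 (fst p) (snd p)) \<in> borel_measurable (borel \<Otimes>\<^sub>M borel)"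
  "f0 t \<in> borel_measurable borel"
proof -
  show f0_pair: "(\<lambda>p. f0 (fst p) (snd p)) \<in> borel_measurable (borel \<Otimes>\<^sub>M borel)"
    using f0_meas by (simp add: split_beta')
  have "(\<lambda>c. (t, c)) \<in> measurable borel (borel \<Otimes>\<^sub>M borel)" by measurable
  from measurable_compose[OF this f0_pair] show "f0 t \<in> borel_measurable borel" by simp
qed

lemma regression_measurable[measurable]: "(\<lambda>w. f0 (T w) (C w)) \<in> borel_measurable M"
proof -
  have "(\<lambda>w. (T w, C w)) \<in> measurable M (borel \<Otimes>\<^sub>M borel)" by measurable
  from measurable_compose[OF this f0_measurable(1)] show ?thesis by simp
qed

lemma Y_measurable[measurable]: "Y \<in> borel_measurable M"
proof -
  have "(\<lambda>w. Y0 w * (1 - T w) + Y1 w * T w) \<in> borel_measurable M" by measurable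
  then show ?thesis by (rule measurable_cong[THEN iffD1, rotated]) (use Y_def in auto)
qed

lemma residual_measurable[measurable]: "residual \<in> borel_measurable M"
  and T_measurable_TC[measurable]: "T \<in> borel_measurable sigma_TC"
  and effect_measurable_TC[measurable]: "effect \<in> borel_measurable sigma_TC"
  and effect_measurable[measurable]: "effect \<in> borel_measurable M"
proof -
  have TC: "(\<lambda>v. (T v, C v)) \<in> measurable sigma_TC (borel \<Otimes>\<^sub>M borel)"
    by (rule measurable_gen_sigma) measurable
  show "T \<in> borel_measurable sigma_TC"
    using measurable_compose[OF TC measurable_fst] by simp
  have "C \<in> borel_measurable sigma_TC"
    using measurable_compose[OF TC measurable_snd] by simp
  then show "effect \<in> borel_measurable sigma_TC"
    unfolding effect_def by measurable
  then show "effect \<in> borel_measurable M"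
    by (rule measurable_from_subalg[OF treat_cov.subalg])
  show "residual \<in> borel_measurable M"
    unfolding residual_def by measurable
qed

lemma Y0_int: "integrable M Y0" and Y1_int: "integrable M Y1"
  using Y0_sq Y1_sq by (auto intro: square_integrable_imp_integrable)

lemma Y_sq: "integrable M (\<lambda>w. (Y w)\<^sup>2)"
proof (rule Bochner_Integration.integrable_bound[where f="\<lambda>w. (Y0 w)\<^sup>2 + (Y1 w)\<^sup>2"])
  show "AE w in M. norm ((Y w)\<^sup>2) \<le> norm ((Y0 w)\<^sup>2 + (Y1 w)\<^sup>2)"
    using T_bin Y_def by (intro AE_I2) auto
qed (use Y0_sq Y1_sq in simp_all)

lemma regression_eq_mixture:
  "AE w in M. f0 (T w) (C w)
     = T w * real_cond_exp M sigma_C Y1 w + (1 - T w) * real_cond_exp M sigma_C Y0 w"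
proof -
  have TY_int: "integrable M (\<lambda>w. T w * Y1 w)" "integrable M (\<lambda>w. (1 - T w) * Y0 w)"
    using T_bin Y0_int Y1_int by (intro integrable_bounded_mult[where c=1] AE_I2; force)+
  have "cond_indep M borel (\<lambda>w. fst (Y1 w, Y0 w)) borel T borel C"
    "cond_indep M borel (\<lambda>w. snd (Y1 w, Y0 w)) borel T borel C"
    by (rule cond_indep_compose[OF ignorability], measurable)+
  then have "AE w in M. real_cond_exp M sigma_TC Y1 w = real_cond_exp M sigma_C Y1 w"
      "AE w in M. real_cond_exp M sigma_TC Y0 w = real_cond_exp M sigma_C Y0 w"
    using T_bin Y0_int Y1_int
    by (simp_all add: cond_exp_pair_eq_of_cond_indep_binary[OF finite_measure_axioms])
  moreover have "AE w in M. real_cond_exp M sigma_TC Y w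
      = real_cond_exp M sigma_TC (\<lambda>w. T w * Y1 w + (1 - T w) * Y0 w) w"
    using Y_def by (intro treat_cov.real_cond_exp_cong AE_I2) (auto simp: algebra_simps)
  moreover have "AE w in M. real_cond_exp M sigma_TC (\<lambda>w. T w * Y1 w + (1 - T w) * Y0 w) w
      = real_cond_exp M sigma_TC (\<lambda>w. T w * Y1 w) w + real_cond_exp M sigma_TC (\<lambda>w. (1 - T w) * Y0 w) w"
    using TY_int by (rule treat_cov.real_cond_exp_add)
  moreover have "AE w in M. real_cond_exp M sigma_TC (\<lambda>w. T w * Y1 w) w = T w * real_cond_exp M sigma_TC Y1 w"
    by (rule treat_cov.real_cond_exp_mult) (simp_all add: TY_int)
  moreover have "AE w in M. real_cond_exp M sigma_TC (\<lambda>w. (1 - T w) * Y0 w) w = (1 - T w) * real_cond_exp M sigma_TC Y0 w"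
    by (rule treat_cov.real_cond_exp_mult) (simp_all add: TY_int)
  ultimately show ?thesis
    using f0_def by eventually_elim simp
qed

lemma treatment_level_sets[measurable]: "{w \<in> space M. T w = t} \<in> sets M"
  by measurable

lemma cond_prob_treated_pos:
  "AE w in M. 0 < real_cond_exp M sigma_C (indicator {v \<in> space M. T v = 1}) w"
  using positivity by eventually_elim (simp add: cond_prob_given_def)

lemma cond_prob_untreated_pos:
  "AE w in M. 0 < real_cond_exp M sigma_C (indicator {v \<in> space M. T v = 0}) w"
proof -
  have untreated: "{v \<in> space M. T v = 0} = space M - {v \<in> space M. T v = 1}"
    using T_bin by auto
  show ?thesis
    unfolding untreated using cov.cond_exp_indicator_diff_space[OF treatment_level_sets[of 1]] positivity
    by eventually_elim (simp add: cond_prob_given_def)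
qed

lemma regression_eq_cond_exp_potential_outcome:
  "AE w in M. f0 1 (C w) = real_cond_exp M sigma_C Y1 w"
  "AE w in M. f0 0 (C w) = real_cond_exp M sigma_C Y0 w"
proof -
  have [measurable]: "C \<in> borel_measurable sigma_C"
    by (rule measurable_gen_sigma) measurable
  show "AE w in M. f0 1 (C w) = real_cond_exp M sigma_C Y1 w"
  proof (rule cov.AE_eq_of_AE_eq_on_cond_prob_pos[OF treatment_level_sets cond_prob_treated_pos])
    show "AE w in M. w \<in> {v \<in> space M. T v = 1} \<longrightarrow> f0 1 (C w) = real_cond_exp M sigma_C Y1 w"
      using regression_eq_mixture by eventually_elim auto
  qed measurable
  show "AE w in M. f0 0 (C w) = real_cond_exp M sigma_C Y0 w"
  proof (rule cov.AE_eq_of_AE_eq_on_cond_prob_pos[OF treatment_level_sets cond_prob_untreated_pos])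
    show "AE w in M. w \<in> {v \<in> space M. T v = 0} \<longrightarrow> f0 0 (C w) = real_cond_exp M sigma_C Y0 w"
      using regression_eq_mixture by eventually_elim auto
  qed measurable
qed

lemma cate_eq_effect: "AE w in M. cate (C w) = effect w"
  using cate_def cov.real_cond_exp_diff[OF Y1_int Y0_int] regression_eq_cond_exp_potential_outcome
  by eventually_elim (simp add: effect_def)

lemma effect_sq: "integrable M (\<lambda>w. (effect w)\<^sup>2)"
proof -
  have "integrable M (\<lambda>w. (real_cond_exp M sigma_C Y1 w - real_cond_exp M sigma_C Y0 w)\<^sup>2)"
    using Y0_int Y1_int Y0_sq Y1_sq
    by (intro integrable_square_diff cov.square_integrable_cond_exp) simp_all
  moreover have "(\<lambda>w. (effect w)\<^sup>2) \<in> borel_measurable M" by measurable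
  moreover have "AE w in M. (real_cond_exp M sigma_C Y1 w - real_cond_exp M sigma_C Y0 w)\<^sup>2 = (effect w)\<^sup>2"
    using regression_eq_cond_exp_potential_outcome by eventually_elim (simp add: effect_def)
  ultimately show ?thesis
    by (rule integrable_cong_AE_imp)
qed

lemma regression_sq: "integrable M (\<lambda>w. (f0 (T w) (C w))\<^sup>2)"
proof -
  have "integrable M (\<lambda>w. (real_cond_exp M sigma_TC Y w)\<^sup>2)"
    using Y_sq square_integrable_imp_integrable[OF Y_measurable Y_sq]
    by (rule treat_cov.square_integrable_cond_exp[rotated])
  moreover have "(\<lambda>w. (f0 (T w) (C w))\<^sup>2) \<in> borel_measurable M" by measurable
  moreover have "AE w in M. (real_cond_exp M sigma_TC Y w)\<^sup>2 = (f0 (T w) (C w))\<^sup>2"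
    using f0_def by eventually_elim simp
  ultimately show ?thesis
    by (rule integrable_cong_AE_imp)
qed

lemma residual_sq: "integrable M (\<lambda>w. (residual w)\<^sup>2)"
  unfolding residual_def using Y_sq regression_sq by (intro integrable_square_diff) simp_all

lemma residual_orthogonal:
  assumes [measurable]: "Z \<in> borel_measurable sigma_TC" and Z_sq: "integrable M (\<lambda>w. (Z w)\<^sup>2)"
  shows "(\<integral>w. Z w * residual w \<partial>M) = 0"
proof -
  have [measurable]: "Z \<in> borel_measurable M"
    by (rule measurable_from_subalg[OF treat_cov.subalg assms(1)])
  have "(\<integral>w. Z w * residual w \<partial>M) = (\<integral>w. Z w * (Y w - real_cond_exp M sigma_TC Y w) \<partial>M)"
  proof (rule integral_cong_AE)
    show "AE w in M. Z w * residual w = Z w * (Y w - real_cond_exp M sigma_TC Y w)"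
      using f0_def by eventually_elim (simp add: residual_def)
  qed measurable
  also have "\<dots> = 0"
    using Z_sq Y_sq
    by (intro treat_cov.integral_mult_cond_exp_residual integrable_mult_of_square_integrable) simp_all
  finally show ?thesis .
qed

lemma switched_error_minus_error:
  "(\<integral>p. (Y (snd p) - f0 (T (fst p)) (C (snd p)))\<^sup>2 \<partial>(M \<Otimes>\<^sub>M M)) - (\<integral>w. (Y w - f0 (T w) (C w))\<^sup>2 \<partial>M)
   = (1 - expectation T) * (\<integral>w. T w * (cate (C w))\<^sup>2 \<partial>M)
     + expectation T * (\<integral>w. (1 - T w) * (cate (C w))\<^sup>2 \<partial>M)"
proof -
  have "integrable M (\<lambda>w. (T w)\<^sup>2 * (effect w)\<^sup>2)"
    using effect_sq T_bin by (intro integrable_bounded_mult[where c=1] AE_I2) auto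
  then have TD_sq: "integrable M (\<lambda>w. (T w * effect w)\<^sup>2)"
    by (simp add: power_mult_distrib)
  have "(\<integral>p. (Y (snd p) - f0 (T (fst p)) (C (snd p)))\<^sup>2 \<partial>(M \<Otimes>\<^sub>M M))
      = (\<integral>p. (residual (snd p) + (T (snd p) - T (fst p)) * effect (snd p))\<^sup>2 \<partial>(M \<Otimes>\<^sub>M M))"
  proof (rule Bochner_Integration.integral_cong)
    fix p assume "p \<in> space (M \<Otimes>\<^sub>M M)"
    then have "T (fst p) \<in> {0, 1}" "T (snd p) \<in> {0, 1}"
      using T_bin by (auto simp: space_pair_measure)
    then show "(Y (snd p) - f0 (T (fst p)) (C (snd p)))\<^sup>2
        = (residual (snd p) + (T (snd p) - T (fst p)) * effect (snd p))\<^sup>2"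
      by (auto simp: residual_def effect_def)
  qed simp
  also have "\<dots> = (\<integral>w. (residual w)\<^sup>2 \<partial>M) + (1 - expectation T) * (\<integral>w. T w * (effect w)\<^sup>2 \<partial>M)
      + expectation T * (\<integral>w. (1 - T w) * (effect w)\<^sup>2 \<partial>M)"
    using residual_orthogonal[OF _ effect_sq] residual_orthogonal[OF _ TD_sq]
    by (intro integral_switched_treatment_square prob_space_axioms T_bin residual_sq effect_sq)
      (simp_all add: ac_simps)
  finally have switched: "(\<integral>p. (Y (snd p) - f0 (T (fst p)) (C (snd p)))\<^sup>2 \<partial>(M \<Otimes>\<^sub>M M))
      = (\<integral>w. (residual w)\<^sup>2 \<partial>M) + (1 - expectation T) * (\<integral>w. T w * (effect w)\<^sup>2 \<partial>M)
      + expectation T * (\<integral>w. (1 - T w) * (effect w)\<^sup>2 \<partial>M)" .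
  have "(\<integral>w. T w * (effect w)\<^sup>2 \<partial>M) = (\<integral>w. T w * (cate (C w))\<^sup>2 \<partial>M)"
    "(\<integral>w. (1 - T w) * (effect w)\<^sup>2 \<partial>M) = (\<integral>w. (1 - T w) * (cate (C w))\<^sup>2 \<partial>M)"
    using cate_eq_effect by (auto intro!: integral_cong_AE elim: AE_mp)
  then show ?thesis
    using switched by (simp add: residual_def)
qed

lemma treated_prob_bounds: "0 < expectation T" "expectation T < 1"
  and measure_treated: "measure M {w \<in> space M. T w = 1} = expectation T"
  and measure_untreated: "measure M {w \<in> space M. T w = 0} = 1 - expectation T"
proof -
  have "expectation T = (\<integral>w. indicator {w \<in> space M. T w = 1} w \<partial>M)"
    by (rule Bochner_Integration.integral_cong) (use T_bin in \<open>auto simp: indicator_def\<close>)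
  then show measure_treated: "measure M {w \<in> space M. T w = 1} = expectation T"
    by simp
  have "{w \<in> space M. T w = 0} = space M - {w \<in> space M. T w = 1}"
    using T_bin by auto
  then show measure_untreated: "measure M {w \<in> space M. T w = 0} = 1 - expectation T"
    using prob_compl[OF treatment_level_sets] measure_treated by simp
  show "0 < expectation T" "expectation T < 1"
    using measure_pos_of_cond_prob_pos[OF cov.subalg treatment_level_sets cond_prob_treated_pos]
      measure_pos_of_cond_prob_pos[OF cov.subalg treatment_level_sets cond_prob_untreated_pos]
      measure_treated measure_untreated by simp_all
qed

lemma expectation_given_treatment:
  "expectation_given_event M {w \<in> space M. T w = 1} g = (\<integral>w. T w * g w \<partial>M) / expectation T"
  "expectation_given_event M {w \<in> space M. T w = 0} g = (\<integral>w. (1 - T w) * g w \<partial>M) / (1 - expectation T)"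
proof -
  have "(\<integral>w. g w * indicator {w \<in> space M. T w = 1} w \<partial>M) = (\<integral>w. T w * g w \<partial>M)"
    "(\<integral>w. g w * indicator {w \<in> space M. T w = 0} w \<partial>M) = (\<integral>w. (1 - T w) * g w \<partial>M)"
    by (rule Bochner_Integration.integral_cong; use T_bin in \<open>auto simp: indicator_def\<close>)+
  then show "expectation_given_event M {w \<in> space M. T w = 1} g = (\<integral>w. T w * g w \<partial>M) / expectation T"
    "expectation_given_event M {w \<in> space M. T w = 0} g = (\<integral>w. (1 - T w) * g w \<partial>M) / (1 - expectation T)"
    by (simp_all add: expectation_given_event_def measure_treated measure_untreated)
qed

end

theorem theorem1:
  fixes M :: "'a measure"
    and Y Y0 Y1 T :: "'a \<Rightarrow> real"
    and C :: "'a \<Rightarrow> real ^ 'k"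
    and f0 :: "real \<Rightarrow> real ^ 'k \<Rightarrow> real"
    and cate :: "real ^ 'k \<Rightarrow> real"
  assumes ps: "prob_space M"
    and T_meas: "T \<in> borel_measurable M"
    and C_meas: "C \<in> borel_measurable M"
    and Y0_meas: "Y0 \<in> borel_measurable M"
    and Y1_meas: "Y1 \<in> borel_measurable M"
    and T_bin: "\<forall>w\<in>space M. T w \<in> {0, 1}"
    and Y0_sq: "integrable M (\<lambda>w. (Y0 w)\<^sup>2)"
    and Y1_sq: "integrable M (\<lambda>w. (Y1 w)\<^sup>2)"
    and Y_def: "\<forall>w\<in>space M. Y w = Y0 w * (1 - T w) + Y1 w * T w"
    and cate_meas: "cate \<in> borel_measurable borel"
    and cate_def: "AE w in M. cate (C w) =
          real_cond_exp M (gen_sigma M borel C) (\<lambda>v. Y1 v - Y0 v) w"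
    and f0_meas: "(\<lambda>(t, c). f0 t c) \<in> borel_measurable (borel \<Otimes>\<^sub>M borel)"
    and f0_def: "AE w in M. f0 (T w) (C w) =
          real_cond_exp M (gen_sigma M (borel \<Otimes>\<^sub>M borel) (\<lambda>v. (T v, C v))) Y w"
    and ignorability: "cond_indep M (borel \<Otimes>\<^sub>M borel) (\<lambda>w. (Y1 w, Y0 w)) borel T borel C"
    and positivity: "AE w in M. 0 < cond_prob_given M (gen_sigma M borel C) {v\<in>space M. T v = 1} w
                           \<and> cond_prob_given M (gen_sigma M borel C) {v\<in>space M. T v = 1} w < 1"
  shows "(\<integral>p. (Y (snd p) - f0 (T (fst p)) (C (snd p)))\<^sup>2 \<partial>(M \<Otimes>\<^sub>M M))
           - (\<integral>w. (Y w - f0 (T w) (C w))\<^sup>2 \<partial>M)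
         = prob_space.variance M T *
           (\<Sum>t\<in>{0::real, 1}. expectation_given_event M {w\<in>space M. T w = t} (\<lambda>w. (cate (C w))\<^sup>2))"
proof -
  interpret potential_outcomes M Y Y0 Y1 T C f0 cate
    using assms by (simp add: potential_outcomes_def potential_outcomes_axioms_def)
  have "expectation T \<noteq> 0" "1 - expectation T \<noteq> 0"
    using treated_prob_bounds by simp_all
  then show ?thesis
    by (simp add: switched_error_minus_error variance_binary[OF T_meas T_bin]
        expectation_given_treatment field_simps)
qed

end
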